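(* Let $n\in\{2,3,\ldots\}$ and $p\in(0,1)$, let $K$ be the Erdős–Rényi random graph on vertex set $\{1,\ldots,n\}$ with edge probability $p$, and let $Y$ be the number of isolated vertices of $K$, with mean $\mu=n(1-p)^{n-1}$ and variance $\sigma^2=n(1-p)^{n-1}\big(1+np(1-p)^{n-2}-(1-p)^{n-2}\big)$. Let $M(\theta)=E\exp(\theta(Y-\mu)/\sigma)$. Define, for real $s$, $$\gamma_s=e^s(pe^s+1-p)^{n-2}(npe^s+1-p)+(n-1)p+1,\qquad H(\theta)=\frac{\mu}{2\sigma^2}\int_0^\theta s\,\gamma_{s/\sigma}\,ds.$$ Then: (i) $M(\theta)\le \exp H(\theta)$ for all $\theta\ge 0$, and for all $t>0$, $$P\Big(\frac{Y-\mu}{\sigma}\ge t\Big)\le \inf_{\theta\ge 0}\exp(-\theta t+H(\theta)).$$ (ii) $M(\theta)\le \exp(\mu\theta^2/\sigma^2)$ for all $\theta\le 0$, and for all $t>0$, $$P\Big(\frac{Y-\mu}{\sigma}\le -t\Big)\le \exp\Big(-\frac{t^2\sigma^2}{4\mu}\Big).$$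
   Context: The Erdős–Rényi random graph on $\{1,\ldots,n\}$ with edge probability $p$: the edge indicators $X_{uv}$, $u\ne v$ (unordered pairs), are independent Bernoulli($p$). A vertex is isolated if it has degree $0$. (The stated formulas for $\mu$ and $\sigma^2$ are the mean and variance of $Y$; $\sigma>0$.) *)

theory Defs
  imports "HOL-Analysis.Analysis" "HOL-Probability.Probability"
begin

text \<open>Unordered pairs {u,v} of distinct vertices in {1..n}, encoded as (u,v) with u < v.\<close>
definition er_pairs :: "nat \<Rightarrow> (nat \<times> nat) set" where
  "er_pairs n = {(u, v). 1 \<le> u \<and> u < v \<and> v \<le> n}"

definition er_graph :: "nat \<Rightarrow> real \<Rightarrow> ((nat \<times> nat) \<Rightarrow> bool) pmf" where
  "er_graph n p = Pi_pmf (er_pairs n) False (\<lambda>_. bernoulli_pmf p)"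

definition er_adj :: "((nat \<times> nat) \<Rightarrow> bool) \<Rightarrow> nat \<Rightarrow> nat \<Rightarrow> bool" where
  "er_adj X u v = (if u < v then X (u, v) else if v < u then X (v, u) else False)"

definition isolated_count :: "nat \<Rightarrow> ((nat \<times> nat) \<Rightarrow> bool) \<Rightarrow> nat" where
  "isolated_count n X = card {v \<in> {1..n}. \<forall>u \<in> {1..n}. u \<noteq> v \<longrightarrow> \<not> er_adj X u v}"

end

theory Submission
  imports Defs
begin

text \<open>
  Deleting all edges at a vertex \<open>v\<close> ("isolating" \<open>v\<close>) leaves the other edges untouched, and
  \<open>v\<close> is isolated with probability \<open>q = (1 - p)^(n - 1)\<close> independently of them.  This gives
  the size-bias identity \<open>E[Y f(Y)] = q \<Sum>v. E f(Y_v)\<close>, with \<open>Y_v\<close> the count after isolating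
  \<open>v\<close>, and therefore \<open>M'(\<theta>) = (q/\<sigma>) \<Sum>v. E[e_\<theta>(Y_v) - e_\<theta>(Y)]\<close> where
  \<open>e_\<theta>(y) = exp(\<theta> (y - \<mu>) / \<sigma>)\<close>.  The increment \<open>Y_v - Y\<close> lies between \<open>0\<close> and one
  plus the degree of \<open>v\<close>, and summed over all \<open>v\<close> it is at most \<open>2n\<close>.  For \<open>\<theta> \<le> 0\<close> this
  gives \<open>M' \<ge> (2\<mu>\<theta>/\<sigma>\<^sup>2) M\<close>.  For \<open>\<theta> \<ge> 0\<close> the degree bound is increasing in the edge
  set while \<open>e_\<theta>(Y)\<close> is decreasing, so Harris' inequality and the explicit moments of a
  binomial degree give \<open>M' \<le> H' M\<close>.  Integrating these differential inequalities bounds \<open>M\<close>,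
  and Chernoff's bound turns the bounds on \<open>M\<close> into the two tail bounds.
\<close>

section \<open>Finite products of Bernoulli distributions\<close>

text \<open>A product of pmfs over a finite index set with values in a finite type has finite support,
  so all expectations below are finite sums and every real function is integrable.\<close>
lemma finite_set_Pi_pmf:
  fixes d :: "'b::finite"
  assumes "finite A"
  shows "finite (set_pmf (Pi_pmf A d q))"
proof (rule finite_subset)
  show "set_pmf (Pi_pmf A d q) \<subseteq> PiE_dflt A d (\<lambda>_. UNIV)"
    using set_Pi_pmf_subset[OF assms, of d q] by (auto simp: PiE_dflt_def)
qed (use assms in auto)

lemma expectation_finite_pmf:
  fixes f :: "'a \<Rightarrow> real"
  assumes "finite (set_pmf P)"
  shows "measure_pmf.expectation P f = (\<Sum>x\<in>set_pmf P. f x * pmf P x)"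
  by (rule integral_measure_pmf_real) (use assms in auto)

lemma expectation_pair_pmf:
  fixes F :: "'a \<times> 'b \<Rightarrow> real"
  assumes A: "finite (set_pmf A)" and B: "finite (set_pmf B)"
  shows "measure_pmf.expectation (pair_pmf A B) F =
     measure_pmf.expectation B (\<lambda>b. measure_pmf.expectation A (\<lambda>a. F (a, b)))"
proof -
  have "measure_pmf.expectation (pair_pmf A B) F
      = (\<Sum>a\<in>set_pmf A. \<Sum>b\<in>set_pmf B. F (a, b) * (pmf A a * pmf B b))"
    using A B by (simp add: expectation_finite_pmf sum.cartesian_product case_prod_unfold
        flip: pmf_pair)
  also have "\<dots> = (\<Sum>b\<in>set_pmf B. (\<Sum>a\<in>set_pmf A. F (a, b) * pmf A a) * pmf B b)"
    by (subst sum.swap) (simp add: sum_distrib_left sum_distrib_right mult_ac)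
  finally show ?thesis by (simp add: expectation_finite_pmf[OF A] expectation_finite_pmf[OF B])
qed

lemma finite_set_bernoulli_pmf: "finite (set_pmf (bernoulli_pmf p))"
  by (rule finite_subset[OF subset_UNIV]) simp

lemma expectation_Pi_pmf_insert:
  fixes h :: "('a \<Rightarrow> bool) \<Rightarrow> real"
  assumes "finite A" "x \<notin> A" "0 \<le> p" "p \<le> 1"
  shows "measure_pmf.expectation (Pi_pmf (insert x A) False (\<lambda>_. bernoulli_pmf p)) h
     = measure_pmf.expectation (Pi_pmf A False (\<lambda>_. bernoulli_pmf p))
          (\<lambda>Y. h (Y(x := True)) * p + h (Y(x := False)) * (1 - p))"
  using assms by (simp add: Pi_pmf_insert case_prod_unfold expectation_pair_pmf finite_set_Pi_pmf
      finite_set_bernoulli_pmf)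

lemma harris_inequality:
  fixes f g :: "('a \<Rightarrow> bool) \<Rightarrow> real"
  assumes "finite A" "0 \<le> p" "p \<le> 1" and "mono f" and "antimono g"
  shows "measure_pmf.expectation (Pi_pmf A False (\<lambda>_. bernoulli_pmf p)) (\<lambda>X. f X * g X)
     \<le> measure_pmf.expectation (Pi_pmf A False (\<lambda>_. bernoulli_pmf p)) f *
        measure_pmf.expectation (Pi_pmf A False (\<lambda>_. bernoulli_pmf p)) g"
  using assms(1,4,5)
proof (induction A arbitrary: f g rule: finite_induct)
  case empty
  then show ?case by simp
next
  case (insert x A)
  let ?P = "Pi_pmf A False (\<lambda>_. bernoulli_pmf p)"
  let ?Q = "Pi_pmf (insert x A) False (\<lambda>_. bernoulli_pmf p)"
  define F where "F Y = f (Y(x := True)) * p + f (Y(x := False)) * (1 - p)" for Y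
  define G where "G Y = g (Y(x := True)) * p + g (Y(x := False)) * (1 - p)" for Y
  have upd: "Y(x := b) \<le> Y'(x := b)" if "Y \<le> Y'" for Y Y' :: "'a \<Rightarrow> bool" and b
    using that by (auto simp: le_fun_def)
  have F_mono: "mono F"
  proof (rule monoI)
    fix Y Y' :: "'a \<Rightarrow> bool" assume "Y \<le> Y'"
    then have "f (Y(x := b)) \<le> f (Y'(x := b))" for b
      using monoD[OF insert.prems(1) upd] by blast
    then show "F Y \<le> F Y'"
      using assms(2,3) unfolding F_def by (intro add_mono mult_right_mono) auto
  qed
  have G_antimono: "antimono G"
  proof (rule antimonoI)
    fix Y Y' :: "'a \<Rightarrow> bool" assume "Y \<le> Y'"
    then have "g (Y(x := b)) \<ge> g (Y'(x := b))" for b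
      using antimonoD[OF insert.prems(2) upd] by blast
    then show "G Y \<ge> G Y'"
      using assms(2,3) unfolding G_def by (intro add_mono mult_right_mono) auto
  qed
  have pointwise: "f (Y(x := True)) * g (Y(x := True)) * p
      + f (Y(x := False)) * g (Y(x := False)) * (1 - p) \<le> F Y * G Y" for Y
  proof -
    have le: "Y(x := False) \<le> Y(x := True)" by (auto simp: le_fun_def)
    have "f (Y(x := True)) - f (Y(x := False)) \<ge> 0"
      using monoD[OF insert.prems(1) le] by linarith
    moreover have "g (Y(x := False)) - g (Y(x := True)) \<ge> 0"
      using antimonoD[OF insert.prems(2) le] by linarith
    ultimately have "0 \<le> (p * (1 - p)) * ((f (Y(x := True)) - f (Y(x := False)))
                               * (g (Y(x := False)) - g (Y(x := True))))"
      using assms(2,3) by simp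
    also have "\<dots> = F Y * G Y - (f (Y(x := True)) * g (Y(x := True)) * p
                                + f (Y(x := False)) * g (Y(x := False)) * (1 - p))"
      unfolding F_def G_def by (simp add: algebra_simps)
    finally show ?thesis by simp
  qed
  have "measure_pmf.expectation ?Q (\<lambda>X. f X * g X) = measure_pmf.expectation ?P (\<lambda>Y.
      f (Y(x := True)) * g (Y(x := True)) * p + f (Y(x := False)) * g (Y(x := False)) * (1 - p))"
    using insert.hyps assms(2,3) by (rule expectation_Pi_pmf_insert)
  also have "\<dots> \<le> measure_pmf.expectation ?P (\<lambda>Y. F Y * G Y)"
    using insert.hyps(1)
    by (intro integral_mono integrable_measure_pmf_finite finite_set_Pi_pmf pointwise)
  also have "\<dots> \<le> measure_pmf.expectation ?P F * measure_pmf.expectation ?P G"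
    using F_mono G_antimono by (rule insert.IH)
  also have "\<dots> = measure_pmf.expectation ?Q f * measure_pmf.expectation ?Q g"
    using insert.hyps assms(2,3) unfolding F_def G_def by (simp add: expectation_Pi_pmf_insert)
  finally show ?case .
qed

section \<open>Isolated vertices under the deletion of a vertex star\<close>

text \<open>For a vertex \<open>v\<close>, \<open>isolate v X\<close> deletes every edge
  at \<open>v\<close>.  The quantity driving the proof is how many new isolated vertices this creates:
  at most \<open>v\<close> itself plus its pendant neighbours, i.e.\ neighbours whose only neighbour
  is \<open>v\<close>.\<close>

definition isolated :: "nat \<Rightarrow> ((nat \<times> nat) \<Rightarrow> bool) \<Rightarrow> nat \<Rightarrow> bool" where
  "isolated n X v = (\<forall>u\<in>{1..n}. u \<noteq> v \<longrightarrow> \<not> er_adj X u v)"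

definition isolate :: "nat \<Rightarrow> ((nat \<times> nat) \<Rightarrow> bool) \<Rightarrow> (nat \<times> nat) \<Rightarrow> bool" where
  "isolate v X e = (if fst e = v \<or> snd e = v then False else X e)"

definition vertex_degree :: "nat \<Rightarrow> ((nat \<times> nat) \<Rightarrow> bool) \<Rightarrow> nat \<Rightarrow> nat" where
  "vertex_degree n X v = card {u\<in>{1..n}. u \<noteq> v \<and> er_adj X u v}"

definition pendants :: "nat \<Rightarrow> ((nat \<times> nat) \<Rightarrow> bool) \<Rightarrow> nat \<Rightarrow> nat set" where
  "pendants n X v = {w\<in>{1..n}. w \<noteq> v \<and> er_adj X w v \<and>
                       (\<forall>u\<in>{1..n}. u \<noteq> w \<longrightarrow> er_adj X u w \<longrightarrow> u = v)}"

lemma isolated_count_eq: "isolated_count n X = card {v\<in>{1..n}. isolated n X v}"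
  unfolding isolated_count_def isolated_def ..

lemma isolated_count_as_sum:
  "real (isolated_count n X) = (\<Sum>v\<in>{1..n}. if isolated n X v then 1 else 0)"
  unfolding isolated_count_eq by (simp add: sum.If_cases Int_def)

lemma er_adj_sym: "er_adj X u w = er_adj X w u"
  unfolding er_adj_def by auto

lemma er_adj_isolate: "er_adj (isolate v X) u w = (er_adj X u w \<and> u \<noteq> v \<and> w \<noteq> v)"
  unfolding er_adj_def isolate_def by auto

lemma er_adj_mono: "X \<le> X' \<Longrightarrow> er_adj X u w \<Longrightarrow> er_adj X' u w"
  unfolding er_adj_def le_fun_def by (auto split: if_splits)

lemma isolated_isolate: "isolated n X w \<Longrightarrow> isolated n (isolate v X) w"
  unfolding isolated_def by (auto simp: er_adj_isolate)

lemma isolated_count_isolate_isolated: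
  assumes "isolated n X v"
  shows "isolated_count n (isolate v X) = isolated_count n X"
proof -
  have "isolated n (isolate v X) w = isolated n X w" if "w \<in> {1..n}" for w
    using assms that unfolding isolated_def er_adj_isolate by (metis er_adj_sym)
  then show ?thesis unfolding isolated_count_eq by (intro arg_cong[where f = card]) auto
qed

lemma isolated_count_isolate_ge: "isolated_count n X \<le> isolated_count n (isolate v X)"
  unfolding isolated_count_eq by (intro card_mono) (auto intro: isolated_isolate)

lemma isolated_after_isolate:
  assumes "isolated n (isolate v X) w" "w \<in> {1..n}"
  shows "isolated n X w \<or> w = v \<or> w \<in> pendants n X v"
proof (cases "isolated n X w \<or> w = v")
  case False
  then have only_v: "\<forall>u\<in>{1..n}. u \<noteq> w \<longrightarrow> er_adj X u w \<longrightarrow> u = v"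
    using assms(1) unfolding isolated_def er_adj_isolate by blast
  from False obtain u where "u \<in> {1..n}" "u \<noteq> w" "er_adj X u w"
    unfolding isolated_def by blast
  with only_v have "er_adj X w v" using er_adj_sym by metis
  then show ?thesis using False only_v assms(2) unfolding pendants_def by blast
qed blast

lemma isolated_count_isolate_le:
  "isolated_count n (isolate v X) \<le> isolated_count n X + 1 + card (pendants n X v)"
proof -
  have "{w\<in>{1..n}. isolated n (isolate v X) w}
      \<subseteq> {w\<in>{1..n}. isolated n X w} \<union> ({v} \<union> pendants n X v)"
    using isolated_after_isolate by blast
  then have "isolated_count n (isolate v X)
      \<le> card ({w\<in>{1..n}. isolated n X w} \<union> ({v} \<union> pendants n X v))"
    unfolding isolated_count_eq by (intro card_mono) (auto simp: pendants_def)
  also have "\<dots> \<le> isolated_count n X + (1 + card (pendants n X v))"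
    unfolding isolated_count_eq
    using card_Un_le[of "{w\<in>{1..n}. isolated n X w}" "{v} \<union> pendants n X v"]
      card_Un_le[of "{v}" "pendants n X v"] by simp
  finally show ?thesis by simp
qed

lemma card_pendants_le_degree: "card (pendants n X v) \<le> vertex_degree n X v"
  unfolding vertex_degree_def pendants_def by (intro card_mono) auto

text \<open>Distinct vertices have disjoint sets of pendant neighbours, hence the sets of pendants
  have total size at most \<open>n\<close>.\<close>
lemma sum_card_pendants: "(\<Sum>v\<in>{1..n}. card (pendants n X v)) \<le> n"
proof -
  have "disjoint_family_on (pendants n X) {1..n}"
    unfolding disjoint_family_on_def pendants_def using er_adj_sym by fastforce
  then have "(\<Sum>v\<in>{1..n}. card (pendants n X v)) = card (\<Union>v\<in>{1..n}. pendants n X v)"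
    by (rule card_UN_disjoint'[symmetric]) (simp_all add: pendants_def)
  also have "\<dots> \<le> card {1..n}" by (intro card_mono) (auto simp: pendants_def)
  finally show ?thesis by simp
qed

lemma isolated_count_antimono: "X \<le> X' \<Longrightarrow> isolated_count n X' \<le> isolated_count n X"
  unfolding isolated_count_eq isolated_def by (intro card_mono) (auto dest: er_adj_mono)

lemma vertex_degree_mono: "X \<le> X' \<Longrightarrow> vertex_degree n X v \<le> vertex_degree n X' v"
  unfolding vertex_degree_def by (intro card_mono) (auto dest: er_adj_mono)

definition new_isolated :: "nat \<Rightarrow> ((nat \<times> nat) \<Rightarrow> bool) \<Rightarrow> nat \<Rightarrow> real" where
  "new_isolated n X v = real (isolated_count n (isolate v X)) - real (isolated_count n X)"

lemma new_isolated_bounds: "0 \<le> new_isolated n X v" "new_isolated n X v \<le> 1 + real (vertex_degree n X v)"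
  using isolated_count_isolate_ge[of n X v] isolated_count_isolate_le[of n v X]
    card_pendants_le_degree[of n X v]
  unfolding new_isolated_def by linarith+

lemma sum_new_isolated: "(\<Sum>v\<in>{1..n}. new_isolated n X v) \<le> 2 * real n"
proof -
  have "(\<Sum>v\<in>{1..n}. new_isolated n X v) \<le> (\<Sum>v\<in>{1..n}. 1 + real (card (pendants n X v)))"
  proof (rule sum_mono)
    fix v
    show "new_isolated n X v \<le> 1 + real (card (pendants n X v))"
      using isolated_count_isolate_le[of n v X] unfolding new_isolated_def by linarith
  qed
  also have "\<dots> \<le> real n + real n"
    using sum_card_pendants[of n X] by (simp add: sum.distrib flip: of_nat_sum)
  finally show ?thesis by simp
qed

section \<open>The random graph seen from one vertex\<close>

text \<open>The edges of the star are independent of all other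
  edges, which yields the size-bias identity for isolated vertices and explicit moments of the
  degree.\<close>

definition star :: "nat \<Rightarrow> nat \<Rightarrow> (nat \<times> nat) set" where
  "star n v = {e\<in>er_pairs n. fst e = v \<or> snd e = v}"

definition star_pair :: "nat \<Rightarrow> nat \<Rightarrow> nat \<times> nat" where
  "star_pair v u = (if u < v then (u, v) else (v, u))"

lemma finite_er_pairs: "finite (er_pairs n)"
  by (rule finite_subset[of _ "{1..n} \<times> {1..n}"]) (auto simp: er_pairs_def)

lemma star_subset: "star n v \<subseteq> er_pairs n"
  unfolding star_def by auto

lemma finite_star: "finite (star n v)"
  using finite_subset[OF star_subset finite_er_pairs] .

lemma star_eq_image: "v \<in> {1..n} \<Longrightarrow> star n v = star_pair v ` ({1..n} - {v})"
  unfolding star_def er_pairs_def star_pair_def by (auto simp: image_iff split: if_splits)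

lemma inj_on_star_pair: "v \<notin> A \<Longrightarrow> inj_on (star_pair v) A"
  unfolding star_pair_def inj_on_def by (auto split: if_splits)

lemma er_adj_star_pair: "u \<noteq> v \<Longrightarrow> er_adj X u v = X (star_pair v u)"
  unfolding star_pair_def er_adj_def by auto

lemma card_star: "v \<in> {1..n} \<Longrightarrow> card (star n v) = n - 1"
  by (simp add: star_eq_image card_image inj_on_star_pair)

lemma degree_as_sum:
  assumes "v \<in> {1..n}"
  shows "real (vertex_degree n X v) = (\<Sum>e\<in>star n v. if X e then 1 else 0)"
proof -
  have "{e\<in>star n v. X e} = star_pair v ` {u\<in>{1..n}. u \<noteq> v \<and> er_adj X u v}"
    unfolding star_eq_image[OF assms] by (auto simp: er_adj_star_pair)
  then have "vertex_degree n X v = card {e\<in>star n v. X e}"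
    unfolding vertex_degree_def by (simp add: card_image inj_on_star_pair)
  then show ?thesis by (simp add: sum.If_cases finite_star Int_def)
qed

lemma isolated_iff_star: "v \<in> {1..n} \<Longrightarrow> isolated n X v = (\<forall>e\<in>star n v. \<not> X e)"
  unfolding isolated_def star_eq_image[of v n] by (auto simp: er_adj_star_pair)

lemma isolate_star_override:
  "isolate v (\<lambda>e. if e \<in> star n v then f e else g e) = isolate v g"
  unfolding isolate_def star_def by (auto simp: fun_eq_iff)

lemma finite_set_er_graph: "finite (set_pmf (er_graph n p))"
  unfolding er_graph_def by (rule finite_set_Pi_pmf[OF finite_er_pairs])

lemma integrable_er_graph: "integrable (measure_pmf (er_graph n p)) (f :: _ \<Rightarrow> real)"
  by (rule integrable_measure_pmf_finite[OF finite_set_er_graph])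

lemma er_graph_split_star:
  "er_graph n p = map_pmf (\<lambda>z e. if e \<in> star n v then fst z e else snd z e)
     (pair_pmf (Pi_pmf (star n v) False (\<lambda>_. bernoulli_pmf p))
               (Pi_pmf (er_pairs n - star n v) False (\<lambda>_. bernoulli_pmf p)))"
proof -
  have "er_pairs n = star n v \<union> (er_pairs n - star n v)" using star_subset by blast
  then have "er_graph n p = Pi_pmf (star n v \<union> (er_pairs n - star n v)) False (\<lambda>_. bernoulli_pmf p)"
    unfolding er_graph_def by simp
  also have "\<dots> = map_pmf (\<lambda>(f, g) e. if e \<in> star n v then f e else g e)
     (pair_pmf (Pi_pmf (star n v) False (\<lambda>_. bernoulli_pmf p))
               (Pi_pmf (er_pairs n - star n v) False (\<lambda>_. bernoulli_pmf p)))"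
    by (rule Pi_pmf_union) (auto intro: finite_star finite_er_pairs)
  finally show ?thesis by (simp add: case_prod_unfold)
qed

lemma expectation_prod_star:
  fixes \<phi> :: "nat \<times> nat \<Rightarrow> bool \<Rightarrow> real"
  assumes "0 \<le> p" "p \<le> 1" and nonneg: "\<And>e b. 0 \<le> \<phi> e b"
  shows "measure_pmf.expectation (er_graph n p) (\<lambda>X. \<Prod>e\<in>star n v. \<phi> e (X e))
       = (\<Prod>e\<in>star n v. \<phi> e True * p + \<phi> e False * (1 - p))"
proof -
  let ?\<psi> = "\<lambda>e b. if e \<in> star n v then \<phi> e b else 1"
  have restrict: "(\<Prod>e\<in>er_pairs n. if e \<in> star n v then h e else 1) = (\<Prod>e\<in>star n v. h e)"
    for h :: "nat \<times> nat \<Rightarrow> real"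
    using prod.inter_restrict[OF finite_er_pairs[of n], where g = h and B = "star n v"]
      Int_absorb1[OF star_subset[of n v]]
    by simp
  have "measure_pmf.expectation (er_graph n p) (\<lambda>X. \<Prod>e\<in>star n v. \<phi> e (X e))
      = measure_pmf.expectation (er_graph n p) (\<lambda>X. \<Prod>e\<in>er_pairs n. ?\<psi> e (X e))"
    by (simp only: restrict)
  also have "\<dots> = (\<Prod>e\<in>er_pairs n. measure_pmf.expectation (bernoulli_pmf p) (?\<psi> e))"
    unfolding er_graph_def
    by (rule expectation_prod_Pi_pmf) (auto intro: finite_er_pairs integrable_measure_pmf_finite nonneg)
  also have "\<dots> = (\<Prod>e\<in>er_pairs n. if e \<in> star n v
                        then \<phi> e True * p + \<phi> e False * (1 - p) else 1)"
    using assms(1,2) by (intro prod.cong refl) auto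
  also have "\<dots> = (\<Prod>e\<in>star n v. \<phi> e True * p + \<phi> e False * (1 - p))"
    by (rule restrict)
  finally show ?thesis .
qed

text \<open>Size bias at a single vertex: the event that \<open>v\<close> is isolated, which has probability
  \<open>(1 - p)^(n - 1)\<close>, is independent of the graph with the star of \<open>v\<close> deleted.\<close>
lemma expectation_isolated_isolate:
  fixes g :: "((nat \<times> nat) \<Rightarrow> bool) \<Rightarrow> real"
  assumes v: "v \<in> {1..n}" and p: "0 \<le> p" "p \<le> 1"
  shows "measure_pmf.expectation (er_graph n p)
           (\<lambda>X. (if isolated n X v then 1 else 0) * g (isolate v X))
     = (1 - p) ^ (n - 1) * measure_pmf.expectation (er_graph n p) (\<lambda>X. g (isolate v X))"
proof -
  let ?A = "Pi_pmf (star n v) False (\<lambda>_. bernoulli_pmf p)"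
  let ?B = "Pi_pmf (er_pairs n - star n v) False (\<lambda>_. bernoulli_pmf p)"
  let ?glue = "\<lambda>z e. if e \<in> star n v then fst z e else snd z e"
  let ?empty = "\<lambda>f. \<Prod>e\<in>star n v. if f e then 0 else (1::real)"
  have finite_A: "finite (set_pmf ?A)" by (rule finite_set_Pi_pmf[OF finite_star])
  have finite_B: "finite (set_pmf ?B)" by (rule finite_set_Pi_pmf) (auto intro: finite_er_pairs)
  have glue: "isolate v (?glue z) = isolate v (snd z)"
    "(if isolated n (?glue z) v then 1 else 0) = ?empty (fst z)" for z
    using isolate_star_override[of v n "fst z" "snd z"] isolated_iff_star[OF v, of "?glue z"]
      finite_star by auto
  have "measure_pmf.expectation ?A ?empty = (1 - p) ^ card (star n v)"
    using p by (subst expectation_prod_Pi_pmf)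
      (auto intro: finite_star integrable_measure_pmf_finite simp: finite_set_bernoulli_pmf)
  then have "measure_pmf.expectation (er_graph n p)
           (\<lambda>X. (if isolated n X v then 1 else 0) * g (isolate v X))
      = (1 - p) ^ (n - 1) * measure_pmf.expectation ?B (\<lambda>Z. g (isolate v Z))"
    using card_star[OF v]
    by (subst er_graph_split_star[of n p v]) (simp add: glue expectation_pair_pmf finite_A finite_B)
  also have "measure_pmf.expectation ?B (\<lambda>Z. g (isolate v Z))
      = measure_pmf.expectation (er_graph n p) (\<lambda>X. g (isolate v X))"
    by (subst er_graph_split_star[of n p v])
      (simp add: glue expectation_pair_pmf_snd[of ?A ?B "\<lambda>Z. g (isolate v Z)", simplified])
  finally show ?thesis .
qed

lemma size_bias_isolated_count:
  fixes f :: "nat \<Rightarrow> real"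
  assumes p: "0 \<le> p" "p \<le> 1"
  shows "measure_pmf.expectation (er_graph n p) (\<lambda>X. real (isolated_count n X) * f (isolated_count n X))
     = (1 - p) ^ (n - 1) * (\<Sum>v\<in>{1..n}.
          measure_pmf.expectation (er_graph n p) (\<lambda>X. f (isolated_count n (isolate v X))))"
proof -
  have "measure_pmf.expectation (er_graph n p) (\<lambda>X. real (isolated_count n X) * f (isolated_count n X))
      = (\<Sum>v\<in>{1..n}. measure_pmf.expectation (er_graph n p)
           (\<lambda>X. (if isolated n X v then 1 else 0) * f (isolated_count n X)))"
    unfolding isolated_count_as_sum sum_distrib_right
    by (rule Bochner_Integration.integral_sum[OF integrable_er_graph])
  also have "\<dots> = (\<Sum>v\<in>{1..n}. measure_pmf.expectation (er_graph n p)
           (\<lambda>X. (if isolated n X v then 1 else 0) * f (isolated_count n (isolate v X))))"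
    by (intro sum.cong refl arg_cong[where f = "measure_pmf.expectation _"])
      (auto simp: fun_eq_iff isolated_count_isolate_isolated)
  also have "\<dots> = (\<Sum>v\<in>{1..n}. (1 - p) ^ (n - 1) *
      measure_pmf.expectation (er_graph n p) (\<lambda>X. f (isolated_count n (isolate v X))))"
    using p by (intro sum.cong refl expectation_isolated_isolate) auto
  finally show ?thesis by (simp add: sum_distrib_left)
qed

lemma expectation_exp_degree:
  assumes v: "v \<in> {1..n}" and p: "0 \<le> p" "p \<le> 1"
  shows "measure_pmf.expectation (er_graph n p) (\<lambda>X. exp (a * real (vertex_degree n X v)))
       = (p * exp a + 1 - p) ^ (n - 1)"
proof -
  have "exp (a * real (vertex_degree n X v)) = (\<Prod>e\<in>star n v. exp (a * (if X e then 1 else 0)))" for X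
    by (simp add: degree_as_sum[OF v] sum_distrib_left exp_sum[OF finite_star])
  then have "measure_pmf.expectation (er_graph n p) (\<lambda>X. exp (a * real (vertex_degree n X v)))
      = (\<Prod>e\<in>star n v. exp (a * 1) * p + exp (a * 0) * (1 - p))"
    using expectation_prod_star[OF p, where \<phi> = "\<lambda>e b. exp (a * (if b then 1 else 0))"] by simp
  then show ?thesis by (simp add: card_star[OF v] add_diff_eq mult.commute)
qed

lemma expectation_edge_exp_degree:
  assumes v: "v \<in> {1..n}" and e0: "e0 \<in> star n v" and p: "0 \<le> p" "p \<le> 1"
  shows "measure_pmf.expectation (er_graph n p)
           (\<lambda>X. (if X e0 then 1 else 0) * exp (a * real (vertex_degree n X v)))
       = p * exp a * (p * exp a + 1 - p) ^ (n - 2)"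
proof -
  define \<phi> where "\<phi> e b = (if e = e0 then (if b then 1 else 0) else 1) * exp (a * (if b then 1 else 0))"
    for e b
  have "(if X e0 then 1 else 0) * exp (a * real (vertex_degree n X v)) = (\<Prod>e\<in>star n v. \<phi> e (X e))" for X
    using e0 finite_star unfolding \<phi>_def prod.distrib
    by (simp add: degree_as_sum[OF v] sum_distrib_left exp_sum)
  then have "measure_pmf.expectation (er_graph n p)
           (\<lambda>X. (if X e0 then 1 else 0) * exp (a * real (vertex_degree n X v)))
      = (\<Prod>e\<in>star n v. \<phi> e True * p + \<phi> e False * (1 - p))"
    using expectation_prod_star[OF p, of \<phi>] by (simp add: \<phi>_def)
  also have "\<dots> = p * exp a * (\<Prod>e\<in>star n v - {e0}. p * exp a + 1 - p)"
    by (subst prod.remove[OF finite_star e0]) (simp add: \<phi>_def add_diff_eq mult.commute)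
  also have "\<dots> = p * exp a * (p * exp a + 1 - p) ^ (n - 2)"
    using card_star[OF v] e0 finite_star by (simp add: card_Diff_singleton numeral_2_eq_2)
  finally show ?thesis .
qed

lemma expectation_degree_exp:
  assumes v: "v \<in> {1..n}" and n: "n \<ge> 2" and p: "0 \<le> p" "p \<le> 1"
  shows "measure_pmf.expectation (er_graph n p)
      (\<lambda>X. (1 + real (vertex_degree n X v)) * exp (a * (1 + real (vertex_degree n X v))))
     = exp a * (p * exp a + 1 - p) ^ (n - 2) * (real n * p * exp a + 1 - p)"
proof -
  let ?E = "measure_pmf.expectation (er_graph n p)"
  let ?c = "p * exp a + 1 - p"
  let ?edge = "\<lambda>e X. if X e then 1 else (0::real)"
  have "(1 + real (vertex_degree n X v)) * exp (a * (1 + real (vertex_degree n X v)))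
      = exp a * (exp (a * real (vertex_degree n X v))
                 + (\<Sum>e\<in>star n v. ?edge e X * exp (a * real (vertex_degree n X v))))" for X
    by (simp add: degree_as_sum[OF v, of X, symmetric] flip: sum_distrib_right)
       (simp add: algebra_simps exp_add)
  then have "?E (\<lambda>X. (1 + real (vertex_degree n X v)) * exp (a * (1 + real (vertex_degree n X v))))
      = exp a * (?E (\<lambda>X. exp (a * real (vertex_degree n X v)))
         + (\<Sum>e\<in>star n v. ?E (\<lambda>X. ?edge e X * exp (a * real (vertex_degree n X v)))))"
    by (simp add: integrable_er_graph Bochner_Integration.integral_sum)
  also have "\<dots> = exp a * (?c ^ (n - 1) + real (n - 1) * (p * exp a * ?c ^ (n - 2)))"
    using v p by (simp add: expectation_exp_degree expectation_edge_exp_degree card_star)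
  also have "\<dots> = exp a * ?c ^ (n - 2) * (?c + real (n - 1) * p * exp a)"
  proof -
    have "n - 1 = Suc (n - 2)" using n by simp
    then show ?thesis by (simp add: algebra_simps)
  qed
  also have "?c + real (n - 1) * p * exp a = real n * p * exp a + 1 - p"
    using n by (simp add: of_nat_diff algebra_simps)
  finally show ?thesis .
qed

text \<open>The function \<open>\<gamma>\<close> of the theorem: for the degree \<open>d\<close> of a vertex,
  \<open>\<gamma>(s) = E[(1 + d) exp(s (1 + d)) + (1 + d)]\<close>.\<close>
definition degree_moment :: "nat \<Rightarrow> real \<Rightarrow> real \<Rightarrow> real" where
  "degree_moment n p s = exp s * (p * exp s + 1 - p) ^ (n - 2) * (real n * p * exp s + 1 - p)
                          + (real n - 1) * p + 1"

lemma expectation_degree_moment: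
  assumes v: "v \<in> {1..n}" and n: "n \<ge> 2" and p: "0 \<le> p" "p \<le> 1"
  shows "measure_pmf.expectation (er_graph n p) (\<lambda>X.
      (1 + real (vertex_degree n X v)) * exp (s * (1 + real (vertex_degree n X v)))
      + (1 + real (vertex_degree n X v))) = degree_moment n p s"
proof -
  have "measure_pmf.expectation (er_graph n p) (\<lambda>X. 1 + real (vertex_degree n X v))
      = real n * p + 1 - p"
    using expectation_degree_exp[OF assms, of 0] by simp
  then show ?thesis
    using expectation_degree_exp[OF assms, of s]
    by (simp add: integrable_er_graph degree_moment_def algebra_simps)
qed

section \<open>The moment generating function and its derivative\<close>

definition tilt :: "nat \<Rightarrow> real \<Rightarrow> real \<Rightarrow> real \<Rightarrow> ((nat \<times> nat) \<Rightarrow> bool) \<Rightarrow> real" where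
  "tilt n \<mu> \<sigma> \<theta> X = exp (\<theta> * (real (isolated_count n X) - \<mu>) / \<sigma>)"

definition mgf :: "nat \<Rightarrow> real \<Rightarrow> real \<Rightarrow> real \<Rightarrow> real \<Rightarrow> real" where
  "mgf n p \<mu> \<sigma> \<theta> = measure_pmf.expectation (er_graph n p) (tilt n \<mu> \<sigma> \<theta>)"

definition mgf_deriv :: "nat \<Rightarrow> real \<Rightarrow> real \<Rightarrow> real \<Rightarrow> real \<Rightarrow> real" where
  "mgf_deriv n p \<mu> \<sigma> \<theta> = measure_pmf.expectation (er_graph n p)
     (\<lambda>X. (real (isolated_count n X) - \<mu>) / \<sigma> * tilt n \<mu> \<sigma> \<theta> X)"

lemma tilt_pos: "tilt n \<mu> \<sigma> \<theta> X > 0"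
  unfolding tilt_def by simp

lemma tilt_isolate:
  "tilt n \<mu> \<sigma> \<theta> (isolate v X) = tilt n \<mu> \<sigma> \<theta> X * exp (\<theta> / \<sigma> * new_isolated n X v)"
  unfolding tilt_def new_isolated_def
  by (simp add: exp_add[symmetric] diff_divide_distrib right_diff_distrib)

lemma tilt_antimono:
  assumes "0 \<le> \<theta>" "0 < \<sigma>"
  shows "antimono (tilt n \<mu> \<sigma> \<theta>)"
proof (rule antimonoI)
  fix X X' :: "nat \<times> nat \<Rightarrow> bool"
  assume "X \<le> X'"
  then have "\<theta> * (real (isolated_count n X') - \<mu>) \<le> \<theta> * (real (isolated_count n X) - \<mu>)"
    using assms(1) isolated_count_antimono by (intro mult_left_mono) auto
  then show "tilt n \<mu> \<sigma> \<theta> X' \<le> tilt n \<mu> \<sigma> \<theta> X"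
    unfolding tilt_def using assms(2) by (simp add: divide_right_mono)
qed

lemma mgf_pos: "mgf n p \<mu> \<sigma> \<theta> > 0"
  unfolding mgf_def expectation_finite_pmf[OF finite_set_er_graph]
  by (intro sum_pos finite_set_er_graph mult_pos_pos tilt_pos)
    (auto simp: set_pmf_not_empty pmf_positive)

lemma mgf_zero: "mgf n p \<mu> \<sigma> 0 = 1"
  unfolding mgf_def tilt_def by simp

lemma mgf_has_derivative: "(mgf n p \<mu> \<sigma> has_real_derivative mgf_deriv n p \<mu> \<sigma> \<theta>) (at \<theta>)"
proof -
  let ?S = "set_pmf (er_graph n p)"
  have "((\<lambda>\<theta>. \<Sum>X\<in>?S. tilt n \<mu> \<sigma> \<theta> X * pmf (er_graph n p) X) has_real_derivative
      (\<Sum>X\<in>?S. (real (isolated_count n X) - \<mu>) / \<sigma> * tilt n \<mu> \<sigma> \<theta> X * pmf (er_graph n p) X))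
      (at \<theta>)"
  proof (rule DERIV_sum)
    fix X
    define k where "k = (real (isolated_count n X) - \<mu>) / \<sigma>"
    have "tilt n \<mu> \<sigma> \<theta>' X = exp (\<theta>' * k)" for \<theta>'
      unfolding tilt_def k_def by simp
    moreover have "((\<lambda>\<theta>. exp (\<theta> * k) * pmf (er_graph n p) X) has_real_derivative
        k * exp (\<theta> * k) * pmf (er_graph n p) X) (at \<theta>)"
      by (auto intro!: derivative_eq_intros simp: mult_ac)
    ultimately show "((\<lambda>\<theta>. tilt n \<mu> \<sigma> \<theta> X * pmf (er_graph n p) X) has_real_derivative
        (real (isolated_count n X) - \<mu>) / \<sigma> * tilt n \<mu> \<sigma> \<theta> X * pmf (er_graph n p) X) (at \<theta>)"
      unfolding k_def by simp
  qed
  then show ?thesis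
    unfolding mgf_def mgf_deriv_def expectation_finite_pmf[OF finite_set_er_graph] by simp
qed

lemma mgf_deriv_eq:
  assumes p: "0 \<le> p" "p \<le> 1" and \<mu>: "\<mu> = real n * (1 - p) ^ (n - 1)"
  shows "mgf_deriv n p \<mu> \<sigma> \<theta> = (1 - p) ^ (n - 1) / \<sigma> * (\<Sum>v\<in>{1..n}.
      measure_pmf.expectation (er_graph n p) (\<lambda>X. tilt n \<mu> \<sigma> \<theta> (isolate v X) - tilt n \<mu> \<sigma> \<theta> X))"
proof -
  let ?E = "measure_pmf.expectation (er_graph n p)"
  let ?q = "(1 - p) ^ (n - 1)"
  have "mgf_deriv n p \<mu> \<sigma> \<theta>
      = (?E (\<lambda>X. real (isolated_count n X) * tilt n \<mu> \<sigma> \<theta> X) - \<mu> * mgf n p \<mu> \<sigma> \<theta>) / \<sigma>"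
    unfolding mgf_deriv_def mgf_def
    by (simp add: diff_divide_distrib left_diff_distrib integrable_er_graph)
  also have "?E (\<lambda>X. real (isolated_count n X) * tilt n \<mu> \<sigma> \<theta> X)
      = ?q * (\<Sum>v\<in>{1..n}. ?E (\<lambda>X. tilt n \<mu> \<sigma> \<theta> (isolate v X)))"
    using size_bias_isolated_count[OF p, of n "\<lambda>y. exp (\<theta> * (real y - \<mu>) / \<sigma>)"]
    unfolding tilt_def .
  also have "\<mu> * mgf n p \<mu> \<sigma> \<theta> = ?q * (\<Sum>v\<in>{1..n}. ?E (tilt n \<mu> \<sigma> \<theta>))"
    unfolding mgf_def \<mu> by simp
  finally show ?thesis
    by (simp add: integrable_er_graph sum_subtractf right_diff_distrib diff_divide_distrib)
qed

text \<open>Lower bound for \<open>\<theta> \<le> 0\<close>: by \<open>exp x - 1 \<ge> x\<close> and since deleting all stars creates at most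
  \<open>2n\<close> isolated vertices in total.\<close>
lemma sum_tilt_increment_lower:
  assumes "\<theta> \<le> 0" "0 < \<sigma>"
  shows "2 * real n * (\<theta> / \<sigma>) * tilt n \<mu> \<sigma> \<theta> X
       \<le> (\<Sum>v\<in>{1..n}. tilt n \<mu> \<sigma> \<theta> (isolate v X) - tilt n \<mu> \<sigma> \<theta> X)"
proof -
  let ?t = "tilt n \<mu> \<sigma> \<theta> X"
  have a: "\<theta> / \<sigma> \<le> 0" using assms by (simp add: divide_nonpos_pos)
  have "?t * (\<theta> / \<sigma>) \<le> 0"
    by (rule mult_nonneg_nonpos[OF less_imp_le[OF tilt_pos] a])
  with sum_new_isolated[of n X]
  have "?t * (\<theta> / \<sigma>) * (2 * real n) \<le> ?t * (\<theta> / \<sigma>) * (\<Sum>v\<in>{1..n}. new_isolated n X v)"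
    by (rule mult_left_mono_neg)
  also have "\<dots> = (\<Sum>v\<in>{1..n}. ?t * (\<theta> / \<sigma> * new_isolated n X v))"
    by (simp add: sum_distrib_left mult.assoc)
  also have "\<dots> \<le> (\<Sum>v\<in>{1..n}. tilt n \<mu> \<sigma> \<theta> (isolate v X) - ?t)"
  proof (rule sum_mono)
    fix v
    have "?t * (\<theta> / \<sigma> * new_isolated n X v) \<le> ?t * (exp (\<theta> / \<sigma> * new_isolated n X v) - 1)"
      using exp_ge_add_one_self tilt_pos[of n \<mu> \<sigma> \<theta> X] by (intro mult_left_mono) (auto simp: algebra_simps)
    then show "?t * (\<theta> / \<sigma> * new_isolated n X v) \<le> tilt n \<mu> \<sigma> \<theta> (isolate v X) - ?t"
      by (simp add: tilt_isolate algebra_simps)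
  qed
  finally show ?thesis by (simp add: mult_ac)
qed

lemma mgf_deriv_lower:
  assumes p: "0 \<le> p" "p \<le> 1" and \<mu>: "\<mu> = real n * (1 - p) ^ (n - 1)"
    and "\<theta> \<le> 0" "0 < \<sigma>"
  shows "2 * \<mu> * \<theta> / \<sigma>\<^sup>2 * mgf n p \<mu> \<sigma> \<theta> \<le> mgf_deriv n p \<mu> \<sigma> \<theta>"
proof -
  let ?E = "measure_pmf.expectation (er_graph n p)"
  have "2 * real n * (\<theta> / \<sigma>) * mgf n p \<mu> \<sigma> \<theta>
      = ?E (\<lambda>X. 2 * real n * (\<theta> / \<sigma>) * tilt n \<mu> \<sigma> \<theta> X)"
    unfolding mgf_def by simp
  also have "\<dots> \<le> ?E (\<lambda>X. \<Sum>v\<in>{1..n}. tilt n \<mu> \<sigma> \<theta> (isolate v X) - tilt n \<mu> \<sigma> \<theta> X)"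
    by (intro integral_mono integrable_er_graph sum_tilt_increment_lower assms(4,5))
  also have "\<dots> = (\<Sum>v\<in>{1..n}. ?E (\<lambda>X. tilt n \<mu> \<sigma> \<theta> (isolate v X) - tilt n \<mu> \<sigma> \<theta> X))"
    by (rule Bochner_Integration.integral_sum[OF integrable_er_graph])
  finally have "(1 - p) ^ (n - 1) / \<sigma> * (2 * real n * (\<theta> / \<sigma>) * mgf n p \<mu> \<sigma> \<theta>)
      \<le> mgf_deriv n p \<mu> \<sigma> \<theta>"
    unfolding mgf_deriv_eq[OF p \<mu>] using p \<open>0 < \<sigma>\<close> by (intro mult_left_mono) auto
  then show ?thesis by (simp add: \<mu> power2_eq_square mult_ac)
qed

text \<open>For \<open>t \<ge> 0\<close>, the trapezoidal rule overestimates \<open>exp t - 1 = \<integral>\<^sub>0\<^sup>t exp\<close> since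
  \<open>exp\<close> is convex.\<close>
lemma exp_minus_one_le_trapezoid:
  fixes t :: real
  assumes "0 \<le> t"
  shows "exp t - 1 \<le> t * (exp t + 1) / 2"
proof -
  define k where "k x = x * (exp x + 1) / 2 - exp x + 1" for x :: real
  have k': "(k has_real_derivative (1 - exp x * (1 - x)) / 2) (at x)" for x
    unfolding k_def by (auto intro!: derivative_eq_intros simp: algebra_simps)
  have "exp x * (1 - x) \<le> exp x * exp (- x)" for x :: real
    using exp_ge_add_one_self[of "- x"] by (intro mult_left_mono) auto
  then have k'_nonneg: "0 \<le> (1 - exp x * (1 - x)) / 2" for x :: real
    by (simp add: exp_minus field_simps)
  have "k 0 \<le> k t"
  proof (rule DERIV_nonneg_imp_increasing_open[OF assms])
    show "\<exists>y. (k has_real_derivative y) (at x) \<and> 0 \<le> y" for x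
      using k' k'_nonneg by blast
    show "continuous_on {0..t} k" unfolding k_def by (intro continuous_intros) auto
  qed
  then show ?thesis unfolding k_def by simp
qed

text \<open>Upper bound for \<open>\<theta> \<ge> 0\<close>: the number of new isolated vertices is at most \<open>1 + d\<close>, with
  \<open>d\<close> the degree of \<open>v\<close>; the resulting bound is increasing in the graph while the tilt is
  decreasing, so Harris' inequality separates their expectations.\<close>
lemma tilt_increment_upper:
  assumes "0 \<le> \<theta>" "0 < \<sigma>"
  shows "tilt n \<mu> \<sigma> \<theta> (isolate v X) - tilt n \<mu> \<sigma> \<theta> X \<le> \<theta> / \<sigma> / 2 *
     (((1 + real (vertex_degree n X v)) * exp (\<theta> / \<sigma> * (1 + real (vertex_degree n X v)))
       + (1 + real (vertex_degree n X v))) * tilt n \<mu> \<sigma> \<theta> X)"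
proof -
  define a where "a = \<theta> / \<sigma>"
  define D where "D = new_isolated n X v"
  define d where "d = 1 + real (vertex_degree n X v)"
  have a: "0 \<le> a" unfolding a_def using assms by simp
  have D: "0 \<le> D" "D \<le> d" unfolding D_def d_def using new_isolated_bounds by auto
  have t: "0 < tilt n \<mu> \<sigma> \<theta> X" by (rule tilt_pos)
  have "tilt n \<mu> \<sigma> \<theta> (isolate v X) - tilt n \<mu> \<sigma> \<theta> X = tilt n \<mu> \<sigma> \<theta> X * (exp (a * D) - 1)"
    unfolding tilt_isolate a_def D_def by (simp add: algebra_simps)
  also have "\<dots> \<le> tilt n \<mu> \<sigma> \<theta> X * ((a * D) * (exp (a * D) + 1) / 2)"
    using exp_minus_one_le_trapezoid[of "a * D"] a D t by (intro mult_left_mono) auto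
  also have "\<dots> \<le> tilt n \<mu> \<sigma> \<theta> X * ((a * d) * (exp (a * d) + 1) / 2)"
  proof -
    have "0 \<le> a * D" "a * D \<le> a * d" using a D by (auto intro: mult_left_mono)
    then show ?thesis
      using t a D by (intro mult_left_mono divide_right_mono mult_mono add_right_mono) simp_all
  qed
  also have "\<dots> = a / 2 * ((d * exp (a * d) + d) * tilt n \<mu> \<sigma> \<theta> X)" by (simp add: algebra_simps)
  finally show ?thesis unfolding a_def d_def .
qed

lemma expectation_tilt_increment_upper:
  assumes v: "v \<in> {1..n}" and n: "n \<ge> 2" and p: "0 \<le> p" "p \<le> 1"
    and \<theta>: "0 \<le> \<theta>" and \<sigma>: "0 < \<sigma>"
  shows "measure_pmf.expectation (er_graph n p)
           (\<lambda>X. tilt n \<mu> \<sigma> \<theta> (isolate v X) - tilt n \<mu> \<sigma> \<theta> X)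
       \<le> \<theta> / \<sigma> / 2 * degree_moment n p (\<theta> / \<sigma>) * mgf n p \<mu> \<sigma> \<theta>"
proof -
  let ?E = "measure_pmf.expectation (er_graph n p)"
  define h where "h X = (1 + real (vertex_degree n X v)) * exp (\<theta> / \<sigma> * (1 + real (vertex_degree n X v)))
                        + (1 + real (vertex_degree n X v))" for X
  have "mono h"
  proof (rule monoI)
    fix X X' :: "nat \<times> nat \<Rightarrow> bool"
    assume "X \<le> X'"
    then have d: "1 + real (vertex_degree n X v) \<le> 1 + real (vertex_degree n X' v)"
      using vertex_degree_mono by simp
    have "\<theta> / \<sigma> * (1 + real (vertex_degree n X v)) \<le> \<theta> / \<sigma> * (1 + real (vertex_degree n X' v))"
      using d \<theta> \<sigma> by (intro mult_left_mono) auto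
    then have "exp (\<theta> / \<sigma> * (1 + real (vertex_degree n X v)))
        \<le> exp (\<theta> / \<sigma> * (1 + real (vertex_degree n X' v)))"
      by simp
    then show "h X \<le> h X'"
      unfolding h_def using d by (intro add_mono mult_mono) auto
  qed
  then have harris: "?E (\<lambda>X. h X * tilt n \<mu> \<sigma> \<theta> X) \<le> ?E h * mgf n p \<mu> \<sigma> \<theta>"
    unfolding mgf_def er_graph_def
    by (rule harris_inequality[OF finite_er_pairs p _ tilt_antimono[OF \<theta> \<sigma>]])
  have "?E (\<lambda>X. tilt n \<mu> \<sigma> \<theta> (isolate v X) - tilt n \<mu> \<sigma> \<theta> X)
      \<le> ?E (\<lambda>X. \<theta> / \<sigma> / 2 * (h X * tilt n \<mu> \<sigma> \<theta> X))"
    using tilt_increment_upper[OF \<theta> \<sigma>] unfolding h_def by (intro integral_mono integrable_er_graph)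
  also have "\<dots> = \<theta> / \<sigma> / 2 * ?E (\<lambda>X. h X * tilt n \<mu> \<sigma> \<theta> X)"
    by simp
  also have "\<dots> \<le> \<theta> / \<sigma> / 2 * (?E h * mgf n p \<mu> \<sigma> \<theta>)"
    using harris \<theta> \<sigma> by (intro mult_left_mono) auto
  also have "?E h = degree_moment n p (\<theta> / \<sigma>)"
    unfolding h_def by (rule expectation_degree_moment[OF v n p])
  finally show ?thesis by (simp add: mult_ac)
qed

lemma mgf_deriv_upper:
  assumes n: "n \<ge> 2" and p: "0 \<le> p" "p \<le> 1" and \<mu>: "\<mu> = real n * (1 - p) ^ (n - 1)"
    and \<theta>: "0 \<le> \<theta>" and \<sigma>: "0 < \<sigma>"
  shows "mgf_deriv n p \<mu> \<sigma> \<theta>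
       \<le> \<mu> / (2 * \<sigma>\<^sup>2) * (\<theta> * degree_moment n p (\<theta> / \<sigma>)) * mgf n p \<mu> \<sigma> \<theta>"
proof -
  have "mgf_deriv n p \<mu> \<sigma> \<theta> \<le> (1 - p) ^ (n - 1) / \<sigma> *
      (\<Sum>v\<in>{1..n}. \<theta> / \<sigma> / 2 * degree_moment n p (\<theta> / \<sigma>) * mgf n p \<mu> \<sigma> \<theta>)"
    unfolding mgf_deriv_eq[OF p \<mu>] using p \<sigma>
    by (intro mult_left_mono sum_mono expectation_tilt_increment_upper[OF _ n p \<theta> \<sigma>]) auto
  then show ?thesis by (simp add: \<mu> power2_eq_square mult_ac)
qed

section \<open>From differential inequalities to tail bounds\<close>

text \<open>Comparison for a positive function with \<open>f' \<le> g f\<close> (resp.\ \<open>f' \<ge> g f\<close>) on an interval: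
  \<open>ln f - G\<close> is monotone when \<open>G\<close> is an antiderivative of \<open>g\<close>.\<close>
lemma log_growth_upper:
  fixes f f' g G :: "real \<Rightarrow> real"
  assumes "a \<le> b" and pos: "\<And>x. 0 < f x"
    and f': "\<And>x. (f has_real_derivative f' x) (at x)"
    and G': "\<And>x. x \<in> {a..b} \<Longrightarrow> (G has_real_derivative g x) (at x within {a..b})"
    and le: "\<And>x. a < x \<Longrightarrow> x < b \<Longrightarrow> f' x \<le> g x * f x"
  shows "f b \<le> f a * exp (G b - G a)"
proof -
  define \<psi> where "\<psi> x = ln (f x) - G x" for x
  have "\<psi> b \<le> \<psi> a"
  proof (rule DERIV_nonpos_imp_decreasing_open[OF \<open>a \<le> b\<close>])
    fix x assume x: "a < x" "x < b"
    have "at x within {a..b} = at x" using x by (intro at_within_interior) auto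
    then have "(\<psi> has_real_derivative f' x / f x - g x) (at x)"
      unfolding \<psi>_def using G'[of x] f'[of x] pos[of x] x by (auto intro!: derivative_eq_intros)
    moreover have "f' x / f x - g x \<le> 0" using le[OF x] pos[of x] by (simp add: pos_divide_le_eq)
    ultimately show "\<exists>y. (\<psi> has_real_derivative y) (at x) \<and> y \<le> 0" by blast
  next
    have "continuous_on {a..b} (\<lambda>x. ln (f x))"
      using f' pos[THEN less_imp_neq, THEN not_sym]
      by (intro continuous_at_imp_continuous_on ballI continuous_ln DERIV_isCont) auto
    moreover have "continuous_on {a..b} G"
      unfolding continuous_on_eq_continuous_within using G' DERIV_continuous by blast
    ultimately show "continuous_on {a..b} \<psi>" unfolding \<psi>_def by (intro continuous_on_diff)
  qed
  then have "exp (ln (f b)) \<le> exp (ln (f a) + (G b - G a))" unfolding \<psi>_def by simp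
  then show ?thesis using pos by (simp add: exp_add)
qed

lemma log_growth_lower:
  fixes f f' g G :: "real \<Rightarrow> real"
  assumes "a \<le> b" and pos: "\<And>x. 0 < f x"
    and f': "\<And>x. (f has_real_derivative f' x) (at x)"
    and G': "\<And>x. (G has_real_derivative g x) (at x)"
    and ge: "\<And>x. a < x \<Longrightarrow> x < b \<Longrightarrow> g x * f x \<le> f' x"
  shows "f a \<le> f b * exp (G a - G b)"
proof -
  define \<psi> where "\<psi> x = ln (f x) - G x" for x
  have \<psi>': "(\<psi> has_real_derivative f' x / f x - g x) (at x)" for x
    unfolding \<psi>_def using G'[of x] f'[of x] pos[of x] by (auto intro!: derivative_eq_intros)
  have "\<psi> a \<le> \<psi> b"
  proof (rule DERIV_nonneg_imp_increasing_open[OF \<open>a \<le> b\<close>])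
    fix x assume x: "a < x" "x < b"
    have "0 \<le> f' x / f x - g x" using ge[OF x] pos[of x] by (simp add: pos_le_divide_eq)
    then show "\<exists>y. (\<psi> has_real_derivative y) (at x) \<and> 0 \<le> y" using \<psi>' by blast
  next
    show "continuous_on {a..b} \<psi>"
      using \<psi>' by (intro continuous_at_imp_continuous_on ballI DERIV_isCont) blast
  qed
  then have "exp (ln (f a)) \<le> exp (ln (f b) + (G a - G b))" unfolding \<psi>_def by simp
  then show ?thesis using pos by (simp add: exp_add)
qed

text \<open>Chernoff's bound: Markov's inequality applied to \<open>exp (\<theta> Z)\<close>.\<close>
lemma chernoff_bound:
  fixes Z :: "'a \<Rightarrow> real"
  assumes "finite (set_pmf P)" "0 \<le> \<theta>"
  shows "measure_pmf.prob P {x. t \<le> Z x}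
       \<le> exp (- \<theta> * t) * measure_pmf.expectation P (\<lambda>x. exp (\<theta> * Z x))"
proof -
  have "measure_pmf.prob P {x. t \<le> Z x} = measure_pmf.expectation P (indicator {x. t \<le> Z x})"
    by simp
  also have "\<dots> \<le> measure_pmf.expectation P (\<lambda>x. exp (- \<theta> * t) * exp (\<theta> * Z x))"
  proof (intro integral_mono integrable_measure_pmf_finite assms(1))
    fix x
    have "t \<le> Z x \<Longrightarrow> 0 \<le> \<theta> * Z x - \<theta> * t"
      using assms(2) by (simp add: mult_left_mono flip: right_diff_distrib)
    then show "indicator {x. t \<le> Z x} x \<le> exp (- \<theta> * t) * exp (\<theta> * Z x)"
      by (auto simp: indicator_def simp flip: exp_add)
  qed
  finally show ?thesis by simp
qed

lemma upper_tail_from_mgf: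
  fixes Z :: "'a \<Rightarrow> real"
  assumes "finite (set_pmf P)"
    and mgf: "\<And>\<theta>. 0 \<le> \<theta> \<Longrightarrow> measure_pmf.expectation P (\<lambda>x. exp (\<theta> * Z x)) \<le> exp (H \<theta>)"
  shows "measure_pmf.prob P {x. t \<le> Z x} \<le> (INF \<theta>\<in>{0..}. exp (- \<theta> * t + H \<theta>))"
proof (rule cINF_greatest)
  fix \<theta> :: real
  assume "\<theta> \<in> {0..}"
  then have \<theta>: "0 \<le> \<theta>" by simp
  have "measure_pmf.prob P {x. t \<le> Z x}
      \<le> exp (- \<theta> * t) * measure_pmf.expectation P (\<lambda>x. exp (\<theta> * Z x))"
    by (rule chernoff_bound[OF assms(1) \<theta>])
  also have "\<dots> \<le> exp (- \<theta> * t) * exp (H \<theta>)"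
    using mgf[OF \<theta>] by (intro mult_left_mono) auto
  also have "\<dots> = exp (- \<theta> * t + H \<theta>)"
    by (simp only: exp_add)
  finally show "measure_pmf.prob P {x. t \<le> Z x} \<le> exp (- \<theta> * t + H \<theta>)" .
qed auto

lemma lower_tail_from_mgf:
  fixes Z :: "'a \<Rightarrow> real"
  assumes "finite (set_pmf P)" "0 < a" "0 < b" "0 < t"
    and mgf: "\<And>\<theta>. \<theta> \<le> 0 \<Longrightarrow>
      measure_pmf.expectation P (\<lambda>x. exp (\<theta> * Z x)) \<le> exp (a * \<theta>\<^sup>2 / b\<^sup>2)"
  shows "measure_pmf.prob P {x. Z x \<le> - t} \<le> exp (- (t\<^sup>2 * b\<^sup>2 / (4 * a)))"
proof -
  define \<theta> where "\<theta> = - (t * b\<^sup>2 / (2 * a))"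
  have \<theta>: "\<theta> \<le> 0" unfolding \<theta>_def using assms(2-4) by simp
  have "measure_pmf.prob P {x. Z x \<le> - t} = measure_pmf.prob P {x. t \<le> - Z x}"
    by (intro arg_cong[where f = "measure_pmf.prob P"]) auto
  also have "\<dots> \<le> exp (\<theta> * t) * measure_pmf.expectation P (\<lambda>x. exp (\<theta> * Z x))"
    using chernoff_bound[OF assms(1), of "- \<theta>" t "\<lambda>x. - Z x"] \<theta> by simp
  also have "\<dots> \<le> exp (\<theta> * t) * exp (a * \<theta>\<^sup>2 / b\<^sup>2)"
    using mgf[OF \<theta>] by (intro mult_left_mono) auto
  also have "\<dots> = exp (- (t\<^sup>2 * b\<^sup>2 / (4 * a)))"
    unfolding \<theta>_def exp_add[symmetric] using assms(2,3)
    by (simp add: field_simps power2_eq_square)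
  finally show ?thesis .
qed

section \<open>Bounds on the moment generating function\<close>

lemma mgf_bound_nonneg:
  assumes n: "n \<ge> 2" and p: "0 \<le> p" "p \<le> 1" and \<mu>: "\<mu> = real n * (1 - p) ^ (n - 1)"
    and \<sigma>: "0 < \<sigma>" and \<theta>: "0 \<le> \<theta>"
  shows "mgf n p \<mu> \<sigma> \<theta>
       \<le> exp (\<mu> / (2 * \<sigma>\<^sup>2) * integral {0..\<theta>} (\<lambda>s. s * degree_moment n p (s / \<sigma>)))"
proof -
  define G where "G x = \<mu> / (2 * \<sigma>\<^sup>2) * integral {0..x} (\<lambda>s. s * degree_moment n p (s / \<sigma>))" for x
  have "continuous_on {0..\<theta>} (\<lambda>s. s * degree_moment n p (s / \<sigma>))"
    unfolding degree_moment_def using \<sigma> by (intro continuous_intros) auto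
  then have G': "(G has_real_derivative \<mu> / (2 * \<sigma>\<^sup>2) * (x * degree_moment n p (x / \<sigma>)))
      (at x within {0..\<theta>})" if "x \<in> {0..\<theta>}" for x
    unfolding G_def[abs_def] using that by (intro DERIV_cmult integral_has_real_derivative)
  have "mgf n p \<mu> \<sigma> \<theta> \<le> mgf n p \<mu> \<sigma> 0 * exp (G \<theta> - G 0)"
  proof (rule log_growth_upper[OF \<theta> mgf_pos mgf_has_derivative G'])
    show "mgf_deriv n p \<mu> \<sigma> x
        \<le> \<mu> / (2 * \<sigma>\<^sup>2) * (x * degree_moment n p (x / \<sigma>)) * mgf n p \<mu> \<sigma> x"
      if "0 < x" for x
      using that by (intro mgf_deriv_upper[OF n p \<mu> _ \<sigma>]) simp
  qed
  then show ?thesis by (simp add: mgf_zero G_def)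
qed

lemma mgf_bound_nonpos:
  assumes p: "0 \<le> p" "p \<le> 1" and \<mu>: "\<mu> = real n * (1 - p) ^ (n - 1)"
    and \<sigma>: "0 < \<sigma>" and \<theta>: "\<theta> \<le> 0"
  shows "mgf n p \<mu> \<sigma> \<theta> \<le> exp (\<mu> * \<theta>\<^sup>2 / \<sigma>\<^sup>2)"
proof -
  have G': "((\<lambda>x. \<mu> * x\<^sup>2 / \<sigma>\<^sup>2) has_real_derivative 2 * \<mu> * x / \<sigma>\<^sup>2) (at x)" for x
    using \<sigma> by (auto intro!: derivative_eq_intros simp: field_simps power2_eq_square)
  have "mgf n p \<mu> \<sigma> \<theta> \<le> mgf n p \<mu> \<sigma> 0 * exp (\<mu> * \<theta>\<^sup>2 / \<sigma>\<^sup>2 - \<mu> * 0\<^sup>2 / \<sigma>\<^sup>2)"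
  proof (rule log_growth_lower[OF \<theta> mgf_pos mgf_has_derivative G'])
    show "2 * \<mu> * x / \<sigma>\<^sup>2 * mgf n p \<mu> \<sigma> x \<le> mgf_deriv n p \<mu> \<sigma> x" if "x < 0" for x
      using that by (intro mgf_deriv_lower[OF p \<mu> _ \<sigma>]) simp
  qed
  then show ?thesis by (simp add: mgf_zero)
qed

text \<open>The variance of \<open>Y\<close> is positive: its second factor is
  \<open>(1 - (1 - p)^(n-2)) + n p (1 - p)^(n-2) > 0\<close>.\<close>
lemma variance_pos:
  assumes "2 \<le> n" "0 < p" "p < 1"
  shows "0 < real n * (1 - p) ^ (n - 1) * (1 + real n * p * (1 - p) ^ (n - 2) - (1 - p) ^ (n - 2))"
proof -
  have "(1 - p) ^ (n - 2) \<le> 1" "0 < real n * p * (1 - p) ^ (n - 2)"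
    using assms by (auto intro: power_le_one)
  then have "0 < 1 + real n * p * (1 - p) ^ (n - 2) - (1 - p) ^ (n - 2)" by linarith
  moreover have "0 < real n * (1 - p) ^ (n - 1)" using assms by simp
  ultimately show ?thesis by simp
qed

theorem theorem1p1:
  fixes n :: nat and p :: real
  assumes "n \<ge> 2" and "0 < p" and "p < 1"
  defines "\<mu> \<equiv> real n * (1 - p) ^ (n - 1)"
      and "\<sigma> \<equiv> sqrt (real n * (1 - p) ^ (n - 1) *
                    (1 + real n * p * (1 - p) ^ (n - 2) - (1 - p) ^ (n - 2)))"
  defines "Y \<equiv> (\<lambda>X. real (isolated_count n X))"
  defines "M \<equiv> (\<lambda>\<theta>::real. measure_pmf.expectation (er_graph n p)
                    (\<lambda>X. exp (\<theta> * (Y X - \<mu>) / \<sigma>)))"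
      and "\<gamma> \<equiv> (\<lambda>s::real. exp s * (p * exp s + 1 - p) ^ (n - 2) * (real n * p * exp s + 1 - p)
                    + (real n - 1) * p + 1)"
  defines "H \<equiv> (\<lambda>\<theta>::real. \<mu> / (2 * \<sigma>\<^sup>2) * integral {0..\<theta>} (\<lambda>s. s * \<gamma> (s / \<sigma>)))"
  shows "(\<forall>\<theta>\<ge>0. M \<theta> \<le> exp (H \<theta>))
       \<and> (\<forall>t>0. measure_pmf.prob (er_graph n p) {X. (Y X - \<mu>) / \<sigma> \<ge> t}
                 \<le> (INF \<theta>\<in>{0..}. exp (- \<theta> * t + H \<theta>)))
       \<and> (\<forall>\<theta>\<le>0. M \<theta> \<le> exp (\<mu> * \<theta>\<^sup>2 / \<sigma>\<^sup>2))
       \<and> (\<forall>t>0. measure_pmf.prob (er_graph n p) {X. (Y X - \<mu>) / \<sigma> \<le> - t}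
                 \<le> exp (- (t\<^sup>2 * \<sigma>\<^sup>2 / (4 * \<mu>))))"
proof -
  have p: "0 \<le> p" "p \<le> 1" using assms(2,3) by auto
  have \<mu>: "\<mu> = real n * (1 - p) ^ (n - 1)" unfolding \<mu>_def ..
  have \<mu>_pos: "0 < \<mu>" unfolding \<mu>_def using assms(1,3) by simp
  have \<sigma>_pos: "0 < \<sigma>" unfolding \<sigma>_def using variance_pos[OF assms(1-3)] by simp
  have M: "M = mgf n p \<mu> \<sigma>" and H: "H = (\<lambda>\<theta>. \<mu> / (2 * \<sigma>\<^sup>2) *
      integral {0..\<theta>} (\<lambda>s. s * degree_moment n p (s / \<sigma>)))"
    unfolding M_def mgf_def tilt_def Y_def H_def \<gamma>_def degree_moment_def by auto
  have M_Z: "M \<theta> = measure_pmf.expectation (er_graph n p) (\<lambda>X. exp (\<theta> * ((Y X - \<mu>) / \<sigma>)))"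
    for \<theta> unfolding M_def by simp
  have upper: "M \<theta> \<le> exp (H \<theta>)" if "0 \<le> \<theta>" for \<theta>
    unfolding M H using mgf_bound_nonneg[OF assms(1) p \<mu> \<sigma>_pos that] .
  have lower: "M \<theta> \<le> exp (\<mu> * \<theta>\<^sup>2 / \<sigma>\<^sup>2)" if "\<theta> \<le> 0" for \<theta>
    unfolding M using mgf_bound_nonpos[OF p \<mu> \<sigma>_pos that] .
  have upper_tail: "measure_pmf.prob (er_graph n p) {X. t \<le> (Y X - \<mu>) / \<sigma>}
      \<le> (INF \<theta>\<in>{0..}. exp (- \<theta> * t + H \<theta>))" for t
    by (rule upper_tail_from_mgf[OF finite_set_er_graph]) (use upper in \<open>simp add: M_Z\<close>)
  have lower_tail: "measure_pmf.prob (er_graph n p) {X. (Y X - \<mu>) / \<sigma> \<le> - t}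
      \<le> exp (- (t\<^sup>2 * \<sigma>\<^sup>2 / (4 * \<mu>)))" if "0 < t" for t
    by (rule lower_tail_from_mgf[OF finite_set_er_graph \<mu>_pos \<sigma>_pos that])
      (use lower in \<open>simp add: M_Z\<close>)
  show ?thesis using upper upper_tail lower lower_tail by blast
qed

end
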